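(* Assume (A1)–(A4), let $x_1\in R\mathbb{B}$, and run the Algorithm with $\eta>0$ and $\rho\in[0,\epsilon]$. Then for every $t\in[T]$ with $t<T$, $$\mathrm{dist}(x_{t+1},\mathcal{X}_\rho)\le\sqrt{\gamma}\,\mathrm{dist}(x_t,\mathcal{X}_\rho)+\eta G_f .$$ Consequently, for all such $t$, $$\mathrm{dist}(x_{t+1},\mathcal{X}_\rho)\le\gamma^{t/2}\,\mathrm{dist}(x_1,\mathcal{X}_\rho)+\frac{\eta G_f}{1-\sqrt{\gamma}} .$$
   Context: Let $d,T$ be positive integers and $[T]=\{1,\dots,T\}$. Write $\|\cdot\|$ for the Euclidean norm and $\mathbb{B}=\{x\in\mathbb{R}^d:\|x\|\le1\}$. For a closed convex set $\mathcal{Y}$, $\Pi_{\mathcal{Y}}$ is the Euclidean projection onto $\mathcal{Y}$ and $\mathrm{dist}(z,\mathcal{Y})=\min_{y\in\mathcal{Y}}\|z-y\|$. For $a\in\mathbb{R}$, $[a]_+=\max(a,0)$. Let $g:\mathbb{R}^d\to\mathbb{R}$ be convex with subdifferential $\partial g(x)$. Set $\mathcal{X}=\{x:g(x)\le0\}$, and for $\rho\ge0$ set $\mathcal{X}_\rho=\{x:g(x)\le-\rho\}$. Assumptions: (A1) there is $R>0$ with $\mathcal{X}\subseteq R\mathbb{B}$; (A2) $f_1,\dots,f_T:\mathbb{R}^d\to\mathbb{R}$ are convex and differentiable, and there is $G_f>0$ with $\|\nabla f_t(x)\|\le G_f$ for all $x\in R\mathbb{B}$ and all $t\in[T]$; (A3)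 there is $G_g>0$ with $\|s\|\le G_g$ for all $s\in\partial g(x)$ and all $x\in R\mathbb{B}$; (A4) there are $\sigma,\epsilon>0$ such that $\mathcal{X}'=\{x:g(x)=-\epsilon\}$ is nonempty and $\|s\|\ge\sigma$ for all $s\in\partial g(x)$ and all $x\in\mathcal{X}'$. Algorithm (OGD with Polyak feasibility steps). Inputs are $x_1\in\mathbb{R}^d$, $\eta>0$ and $\rho\ge0$. For $t=1,\dots,T$: - play $x_t$ and then receive $f_t$; the functions may be chosen adversarially and may depend on past actions; - query $g_t=g(x_t)$ and some $s_t\in\partial g(x_t)$; - set $y_t=x_t-\eta\nabla f_t(x_t)$; - if $s_t\ne0$, set $x_{t+1}=\Pi_{R\mathbb{B}}\big(y_t-\frac{[g_t+s_t^\top(y_t-x_t)+\rho]_+}{\|s_t\|^2}s_t\big)$; if $s_t=0$, set $x_{t+1}=\Pi_{R\mathbb{B}}(y_t)$. Also $\gamma=1-\sigma^2/G_g^2$. *)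

theory Defs
  imports "HOL-Analysis.Analysis"
begin

definition subdiff :: "('a::real_inner \<Rightarrow> real) \<Rightarrow> 'a \<Rightarrow> 'a set" where
  "subdiff g x = {s. \<forall>y. g y \<ge> g x + inner s (y - x)}"

definition polyak_step ::
  "real \<Rightarrow> real \<Rightarrow> real \<Rightarrow> ('a::euclidean_space \<Rightarrow> real) \<Rightarrow> 'a \<Rightarrow> 'a \<Rightarrow> 'a \<Rightarrow> 'a" where
  "polyak_step R eta rho g s grad xt =
     (let y = xt - eta *\<^sub>R grad in
      if s \<noteq> 0
      then closest_point (cball 0 R)
             (y - (max (g xt + inner s (y - xt) + rho) 0 / (norm s)\<^sup>2) *\<^sub>R s)
      else closest_point (cball 0 R) y)"

end

theory Submission
  imports Defs
begin

(*
  The feasibility part of the step is the projection onto the halfspace cut out by the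
  linearisation of g at x, shifted by \<rho>; by the subgradient inequality this halfspace contains
  the sublevel set X_\<rho>. A halfspace projection is nonexpansive, and it decreases the squared
  distance from x to any point of X_\<rho> by at least ([g x + \<rho>]_+ / G_g)^2. Sharpness at level -\<epsilon>
  gives the error bound \<sigma> dist(x, X_\<rho>) \<le> [g x + \<rho>]_+: a subgradient at the projection of x
  onto X_\<epsilon> can be chosen normal to X_\<epsilon>, so g grows at rate at least \<sigma> along the segment back
  to x. Hence the squared distance contracts by the factor \<gamma>, while the gradient step and the
  projection onto the ball of radius R, which contains X_\<rho>, add at most \<eta> G_f. Unrolling this
  recursion gives the geometric bound.
*)

lemma closed_sublevel_convex_on:
  fixes g :: "'a::euclidean_space \<Rightarrow> real"
  assumes "convex_on UNIV g"
  shows "closed {z. g z \<le> c}"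
  using closed_Collect_le[OF convex_on_continuous[OF open_UNIV assms] continuous_on_const] .

lemma convex_sublevel_convex_on:
  assumes "convex_on UNIV g"
  shows "convex {z. g z \<le> c}"
  unfolding convex_alt
proof (intro ballI allI impI)
  fix x y and u :: real
  assume "x \<in> {z. g z \<le> c}" "y \<in> {z. g z \<le> c}" and u: "0 \<le> u \<and> u \<le> 1"
  then have "(1 - u) * g x + u * g y \<le> (1 - u) * c + u * c"
    by (intro add_mono mult_left_mono) auto
  then show "(1 - u) *\<^sub>R x + u *\<^sub>R y \<in> {z. g z \<le> c}"
    using convex_onD[OF assms, of u x y] u by (simp add: algebra_simps)
qed

lemma convex_on_slope_across_hyperplane:
  fixes g :: "'a::real_inner \<Rightarrow> real"
  assumes cvx: "convex_on UNIV g"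
    and on_hyperplane: "\<And>m. inner d m = b \<Longrightarrow> c \<le> g m"
    and z: "inner d z < b" and z': "b < inner d z'"
  shows "(g z - c) / (inner d z - b) \<le> (g z' - c) / (inner d z' - b)"
proof -
  define t where "t = (inner d z' - b) / (inner d z' - inner d z)"
  have t: "0 \<le> t" "t \<le> 1" using z z' by (auto simp: t_def field_simps)
  have t_scaled: "t * (inner d z' - inner d z) = inner d z' - b"
    using z z' by (simp add: t_def)
  then have one_minus_t_scaled: "(1 - t) * (inner d z' - inner d z) = b - inner d z"
    by (simp add: left_diff_distrib)
  define m where "m = (1 - t) *\<^sub>R z' + t *\<^sub>R z"
  have "inner d m = b"
    using t_scaled by (simp add: m_def algebra_simps)
  then have "c \<le> (1 - t) * g z' + t * g z"
    using on_hyperplane convex_onD[OF cvx t, of z' z] by (fastforce simp: m_def)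
  then have "0 \<le> (1 - t) * (g z' - c) + t * (g z - c)"
    by (simp add: algebra_simps)
  then have "0 \<le> ((1 - t) * (g z' - c) + t * (g z - c)) * (inner d z' - inner d z)"
    using z z' by simp
  also have "\<dots> = ((1 - t) * (inner d z' - inner d z)) * (g z' - c)
      + (t * (inner d z' - inner d z)) * (g z - c)"
    by (simp add: algebra_simps)
  also have "\<dots> = (b - inner d z) * (g z' - c) + (inner d z' - b) * (g z - c)"
    unfolding t_scaled one_minus_t_scaled ..
  finally show ?thesis
    using z z' by (simp add: divide_simps) (simp add: algebra_simps)
qed

lemma convex_on_minorant_from_hyperplane:
  fixes g :: "'a::real_inner \<Rightarrow> real"
  assumes cvx: "convex_on UNIV g"
    and above: "\<And>z. b \<le> inner d z \<Longrightarrow> c \<le> g z"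
    and w: "b < inner d w"
  obtains \<mu> where "0 \<le> \<mu>" "\<And>y. c + \<mu> * (inner d y - b) \<le> g y"
proof
  define slopes where "slopes = (\<lambda>z. (g z - c) / (inner d z - b)) ` {z. b < inner d z}"
  have ne: "slopes \<noteq> {}" using w by (auto simp: slopes_def)
  have nonneg: "\<forall>r\<in>slopes. 0 \<le> r" using above by (force simp: slopes_def)
  then have bdd: "bdd_below slopes" by (meson bdd_belowI)
  show "0 \<le> Inf slopes" using ne nonneg by (simp add: cInf_greatest)
  show "c + Inf slopes * (inner d y - b) \<le> g y" for y
  proof (cases "inner d y" b rule: linorder_cases)
    case less
    have "(g y - c) / (inner d y - b) \<le> Inf slopes"
      using convex_on_slope_across_hyperplane[OF cvx _ less] above
      by (intro cInf_greatest[OF ne]) (auto simp: slopes_def)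
    with less show ?thesis by (simp add: divide_le_eq algebra_simps)
  next
    case equal
    then show ?thesis using above by simp
  next
    case greater
    have "Inf slopes \<le> (g y - c) / (inner d y - b)"
      using greater by (intro cInf_lower[OF _ bdd]) (auto simp: slopes_def)
    with greater show ?thesis by (simp add: le_divide_eq algebra_simps)
  qed
qed

lemma convex_on_level_subgradient:
  fixes g :: "'a::euclidean_space \<Rightarrow> real"
  assumes cvx: "convex_on UNIV g" and ne: "{z. g z \<le> c} \<noteq> {}" and w: "c < g w"
  obtains p v where "g p = c" "v \<in> subdiff g p" "c + norm v * dist w p \<le> g w"
proof -
  define S where "S = {z. g z \<le> c}"
  have S: "closed S" "convex S" "S \<noteq> {}"
    using closed_sublevel_convex_on[OF cvx] convex_sublevel_convex_on[OF cvx] ne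
    by (auto simp: S_def)
  define p where "p = closest_point S w"
  \<comment> \<open>the subgradient will be a nonnegative multiple of the outer normal d at p\<close>
  define d where "d = w - p"
  have p: "p \<in> S" using closest_point_in_set[OF S(1,3)] by (simp add: p_def)
  have S_below: "inner d z \<le> inner d p" if "z \<in> S" for z
    using closest_point_dot[OF S(2,1) that, of w] by (simp add: p_def d_def inner_diff_right)
  have d_sq: "inner d w - inner d p = inner d d"
    by (simp add: d_def flip: inner_diff_right)
  have "d \<noteq> 0" using p w by (auto simp: d_def S_def)
  then have w_above: "inner d p < inner d w"
    using d_sq by (metis diff_gt_0_iff_gt inner_gt_zero_iff)
  have above: "c \<le> g z" if z: "inner d p \<le> inner d z" for z
  proof (rule ccontr)
    assume "\<not> c \<le> g z"
    then have gz: "g z < c" by simp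
    \<comment> \<open>moving a little from z towards w leaves S, yet keeps g below c\<close>
    define t where "t = (c - g z) / (2 * (g w - g z))"
    have t: "0 < t" "t \<le> 1" using gz w by (auto simp: t_def field_simps)
    define m where "m = (1 - t) *\<^sub>R z + t *\<^sub>R w"
    have "inner d z = inner d p" using S_below[of z] gz z by (simp add: S_def)
    then have "inner d m = inner d p + t * (inner d w - inner d p)"
      by (simp add: m_def algebra_simps)
    then have "inner d p < inner d m"
      using mult_pos_pos[OF t(1), of "inner d w - inner d p"] w_above by simp
    then have "m \<notin> S" using S_below by fastforce
    moreover have "g m \<le> g z + t * (g w - g z)"
      using convex_onD[OF cvx, of t z w] t by (simp add: m_def algebra_simps)
    moreover have "t * (g w - g z) = (c - g z) / 2" using gz w by (simp add: t_def field_simps)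
    ultimately show False using gz by (simp add: S_def field_simps)
  qed
  obtain \<mu> where \<mu>: "0 \<le> \<mu>" "\<And>y. c + \<mu> * (inner d y - inner d p) \<le> g y"
    using convex_on_minorant_from_hyperplane[OF cvx above w_above] by blast
  have gp: "g p = c" using \<mu>(2)[of p] p by (simp add: S_def)
  have "\<mu> *\<^sub>R d \<in> subdiff g p"
    using \<mu>(2) by (simp add: subdiff_def gp inner_diff_right right_diff_distrib)
  moreover have "norm (\<mu> *\<^sub>R d) * dist w p = \<mu> * (inner d w - inner d p)"
    using \<mu>(1) by (simp add: d_sq dist_norm d_def[symmetric] power2_eq_square
        flip: power2_norm_eq_inner)
  then have "c + norm (\<mu> *\<^sub>R d) * dist w p \<le> g w" using \<mu>(2)[of w] by simp
  ultimately show ?thesis using that gp by blast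
qed

lemma infdist_sublevel_error_bound:
  fixes g :: "'a::euclidean_space \<Rightarrow> real"
  assumes cvx: "convex_on UNIV g" and ne: "{z. g z \<le> c} \<noteq> {}" and "c \<le> b" "0 \<le> \<sigma>"
    and sharp: "\<And>z v. g z = c \<Longrightarrow> v \<in> subdiff g z \<Longrightarrow> \<sigma> \<le> norm v"
  shows "\<sigma> * infdist w {z. g z \<le> b} \<le> max (g w - b) 0"
proof (cases "g w \<le> b")
  case True
  then show ?thesis by simp
next
  case False
  then have wb: "b < g w" by simp
  with \<open>c \<le> b\<close> obtain p v where gp: "g p = c" and v: "v \<in> subdiff g p"
      and gw: "c + norm v * dist w p \<le> g w"
    using convex_on_level_subgradient[OF cvx ne] by (metis order.strict_trans1)
  have "\<sigma> * dist w p \<le> g w - c"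
    using gw sharp[OF gp v] mult_right_mono[of \<sigma> "norm v" "dist w p"] by simp
  \<comment> \<open>the point of the segment from w to p where the convex bound on g reaches b\<close>
  define \<theta> where "\<theta> = (g w - b) / (g w - c)"
  have \<theta>: "0 \<le> \<theta>" "\<theta> \<le> 1" "\<theta> * (g w - c) = g w - b"
    using wb \<open>c \<le> b\<close> by (auto simp: \<theta>_def field_simps)
  define q where "q = (1 - \<theta>) *\<^sub>R w + \<theta> *\<^sub>R p"
  have "g q \<le> (1 - \<theta>) * g w + \<theta> * g p"
    using convex_onD[OF cvx \<theta>(1,2)] by (simp add: q_def)
  also have "\<dots> = g w - \<theta> * (g w - c)" by (simp add: gp algebra_simps)
  finally have q: "g q \<le> b" using \<theta>(3) by simp
  have "dist w q = \<theta> * dist w p"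
    using \<theta>(1) by (simp add: q_def dist_norm algebra_simps flip: scaleR_diff_right)
  then have "\<sigma> * infdist w {z. g z \<le> b} \<le> \<theta> * (\<sigma> * dist w p)"
    using infdist_le[of q "{z. g z \<le> b}" w] q \<open>0 \<le> \<sigma>\<close>
    by (simp add: mult_left_mono mult.left_commute)
  also have "\<dots> \<le> \<theta> * (g w - c)"
    using \<open>\<sigma> * dist w p \<le> g w - c\<close> \<theta>(1) by (rule mult_left_mono)
  finally show ?thesis using \<theta>(3) by simp
qed

lemma level_subgradient_norm_lower_le_upper:
  fixes g :: "'a::euclidean_space \<Rightarrow> real"
  assumes cvx: "convex_on UNIV g" and ne: "{z. g z \<le> c} \<noteq> {}"
    and K: "bounded K" "{z. g z \<le> c} \<subseteq> K"
    and upper: "\<And>z v. z \<in> K \<Longrightarrow> v \<in> subdiff g z \<Longrightarrow> norm v \<le> G"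
    and lower: "\<And>z v. g z = c \<Longrightarrow> v \<in> subdiff g z \<Longrightarrow> \<sigma> \<le> norm v"
  shows "\<sigma> \<le> G"
proof -
  have "K \<noteq> UNIV" using K(1) by auto
  then obtain w where "w \<notin> K" by blast
  then have "c < g w" using K(2) by force
  then obtain p v where "g p = c" "v \<in> subdiff g p"
    using convex_on_level_subgradient[OF cvx ne] by blast
  with K(2) show ?thesis using upper lower by force
qed

(* For s \<noteq> 0 this is the projection onto the halfspace {v. a + s \<bullet> v \<le> 0}; for s = 0 it is
   the identity, because division by zero yields 0. *)

definition polyak_cut :: "'a::real_inner \<Rightarrow> real \<Rightarrow> 'a \<Rightarrow> 'a" where
  "polyak_cut s a v = v - (max (a + inner s v) 0 / (norm s)\<^sup>2) *\<^sub>R s"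

lemma polyak_step_eq_polyak_cut:
  "polyak_step R \<eta> \<rho> g s grad x =
     closest_point (cball 0 R) (polyak_cut s (g x + \<rho> - inner s x) (x - \<eta> *\<^sub>R grad))"
  by (simp add: polyak_step_def polyak_cut_def Let_def algebra_simps)

lemma max_zero_diff_mult_le:
  fixes \<alpha> \<beta> :: real
  shows "(max \<alpha> 0 - max \<beta> 0) * (max \<alpha> 0 - max \<beta> 0 - 2 * (\<alpha> - \<beta>)) \<le> 0"
  by (cases "\<alpha> \<le> 0"; cases "\<beta> \<le> 0") (auto simp: mult_le_0_iff)

lemma dist_polyak_cut_le: "dist (polyak_cut s a v) (polyak_cut s a w) \<le> dist v w"
proof -
  define k where "k = (max (a + inner s v) 0 - max (a + inner s w) 0) / (norm s)\<^sup>2"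
  have "polyak_cut s a v - polyak_cut s a w = (v - w) - k *\<^sub>R s"
    by (simp add: polyak_cut_def k_def diff_divide_distrib algebra_simps)
  moreover have "(norm ((v - w) - k *\<^sub>R s))\<^sup>2 = (norm (v - w))\<^sup>2
      + k * (k * (norm s)\<^sup>2 - 2 * inner s (v - w))"
    unfolding power2_norm_eq_inner
    by (simp add: inner_commute algebra_simps)
  moreover have "k * (k * (norm s)\<^sup>2 - 2 * inner s (v - w)) \<le> 0"
  proof (cases "s = 0")
    case False
    define \<Delta> where "\<Delta> = max (a + inner s v) 0 - max (a + inner s w) 0"
    have "\<Delta> * (\<Delta> - 2 * inner s (v - w)) \<le> 0"
      using max_zero_diff_mult_le[of "a + inner s v" "a + inner s w"]
      by (simp add: \<Delta>_def inner_diff_right)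
    with False show ?thesis by (simp add: k_def \<Delta>_def[symmetric] field_simps divide_nonpos_pos)
  qed simp
  ultimately have "(dist (polyak_cut s a v) (polyak_cut s a w))\<^sup>2 \<le> (dist v w)\<^sup>2"
    by (simp add: dist_norm)
  then show ?thesis by (rule power2_le_imp_le) simp
qed

lemma dist_polyak_cut_sq_le:
  assumes p: "a + inner s p \<le> 0" and G: "norm s \<le> G"
  shows "(dist (polyak_cut s a x) p)\<^sup>2 \<le> (dist x p)\<^sup>2 - (max (a + inner s x) 0 / G)\<^sup>2"
proof (cases "s = 0")
  case True
  then show ?thesis using p by (simp add: polyak_cut_def)
next
  case False
  define m where "m = max (a + inner s x) 0"
  define N where "N = (norm s)\<^sup>2"
  have N: "0 < N" "N \<le> G\<^sup>2" using False G by (auto simp: N_def power_mono)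
  have cut: "polyak_cut s a x = x - (m / N) *\<^sub>R s"
    by (simp add: polyak_cut_def m_def N_def)
  have "(dist (polyak_cut s a x) p)\<^sup>2 = (norm ((x - p) - (m / N) *\<^sub>R s))\<^sup>2"
    unfolding cut dist_norm by (simp add: algebra_simps)
  also have "\<dots> = (norm (x - p))\<^sup>2 - 2 * (m / N) * inner s (x - p) + (m / N)\<^sup>2 * (norm s)\<^sup>2"
    unfolding power2_norm_eq_inner by (simp add: inner_commute algebra_simps power2_eq_square)
      (simp add: diff_divide_distrib)
  also have "\<dots> = (dist x p)\<^sup>2 - (2 * m * inner s (x - p) - m\<^sup>2) / N"
    using N(1) unfolding N_def[symmetric] by (simp add: dist_norm field_simps power2_eq_square)
  also have "\<dots> \<le> (dist x p)\<^sup>2 - m\<^sup>2 / N"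
  proof -
    have "m * m \<le> m * inner s (x - p)"
      using p by (auto simp: m_def max_def inner_diff_right intro: mult_left_mono)
    then show ?thesis using N(1) by (simp add: divide_right_mono power2_eq_square)
  qed
  also have "\<dots> \<le> (dist x p)\<^sup>2 - (m / G)\<^sup>2"
    using N by (simp add: power_divide frac_le)
  finally show ?thesis by (simp add: m_def)
qed

lemma infdist_polyak_step_le:
  fixes g :: "'a::euclidean_space \<Rightarrow> real" and \<rho> :: real
  defines "X \<equiv> {z. g z \<le> - \<rho>}"
  assumes cvx: "convex_on UNIV g" and X: "X \<noteq> {}" "X \<subseteq> cball 0 R"
    and s: "s \<in> subdiff g x" "norm s \<le> G" and grad: "norm grad \<le> Gf" and "0 \<le> \<eta>"
    and sharp: "\<sigma> * infdist x X \<le> max (g x + \<rho>) 0" and "0 \<le> \<sigma>"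
  shows "infdist (polyak_step R \<eta> \<rho> g s grad x) X
           \<le> sqrt (1 - \<sigma>\<^sup>2 / G\<^sup>2) * infdist x X + \<eta> * Gf"
proof -
  define a where "a = g x + \<rho> - inner s x"
  define y where "y = x - \<eta> *\<^sub>R grad"
  define B where "B = cball (0::'a) R"
  have "closed X" unfolding X_def by (rule closed_sublevel_convex_on[OF cvx])
  then obtain p where p: "p \<in> X" and D: "infdist x X = dist x p"
    using infdist_attains_inf X(1) by blast
  have B: "convex B" "closed B" "B \<noteq> {}" "p \<in> B" using p X(2) by (auto simp: B_def)
  have "g x + inner s (p - x) \<le> g p" using s(1) by (simp add: subdiff_def)
  then have "a + inner s p \<le> 0" using p by (simp add: a_def X_def inner_diff_right)
  then have "(dist (polyak_cut s a x) p)\<^sup>2 \<le> (dist x p)\<^sup>2 - (max (g x + \<rho>) 0 / G)\<^sup>2"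
    using dist_polyak_cut_sq_le[OF _ s(2), of a p x] by (simp add: a_def)
  also have "\<dots> \<le> (dist x p)\<^sup>2 - (\<sigma> * dist x p / G)\<^sup>2"
  proof -
    have "0 \<le> G" using norm_ge_zero s(2) by (rule order_trans)
    then have "\<sigma> * dist x p / G \<le> max (g x + \<rho>) 0 / G"
      using sharp by (simp add: D divide_right_mono)
    then show ?thesis
      using \<open>0 \<le> \<sigma>\<close> \<open>0 \<le> G\<close> by (simp add: power_mono)
  qed
  also have "\<dots> = (1 - \<sigma>\<^sup>2 / G\<^sup>2) * (dist x p)\<^sup>2"
    by (simp add: power_divide algebra_simps)
  finally have "dist (polyak_cut s a x) p \<le> sqrt ((1 - \<sigma>\<^sup>2 / G\<^sup>2) * (dist x p)\<^sup>2)"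
    by (rule real_le_rsqrt)
  then have cut_x: "dist (polyak_cut s a x) p \<le> sqrt (1 - \<sigma>\<^sup>2 / G\<^sup>2) * infdist x X"
    by (simp add: D real_sqrt_mult)
  have "dist y x \<le> \<eta> * Gf"
    using grad \<open>0 \<le> \<eta>\<close> by (simp add: y_def dist_norm mult_left_mono)
  then have cut_y: "dist (polyak_cut s a y) (polyak_cut s a x) \<le> \<eta> * Gf"
    using dist_polyak_cut_le[of s a y x] by linarith
  have "infdist (polyak_step R \<eta> \<rho> g s grad x) X \<le> dist (closest_point B (polyak_cut s a y)) p"
    using infdist_le[OF p] by (simp add: polyak_step_eq_polyak_cut a_def y_def B_def)
  also have "\<dots> = dist (closest_point B (polyak_cut s a y)) (closest_point B p)"
    using B(4) by (simp add: closest_point_self)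
  also have "\<dots> \<le> dist (polyak_cut s a y) p"
    using closest_point_lipschitz[OF B(1-3)] .
  also have "\<dots> \<le> dist (polyak_cut s a y) (polyak_cut s a x) + dist (polyak_cut s a x) p"
    by (rule dist_triangle)
  finally show ?thesis using cut_x cut_y by simp
qed

lemma infdist_polyak_step_le_sharp:
  fixes g :: "'a::euclidean_space \<Rightarrow> real" and \<rho> :: real
  assumes cvx: "convex_on UNIV g" and ball: "{z. g z \<le> 0} \<subseteq> cball 0 R"
    and level: "{z. g z \<le> - \<epsilon>} \<noteq> {}" "0 \<le> \<rho>" "\<rho> \<le> \<epsilon>"
    and sharp: "0 \<le> \<sigma>" "\<And>z v. g z = - \<epsilon> \<Longrightarrow> v \<in> subdiff g z \<Longrightarrow> \<sigma> \<le> norm v"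
    and s: "s \<in> subdiff g x" "norm s \<le> G" and grad: "norm grad \<le> Gf" and "0 \<le> \<eta>"
  shows "infdist (polyak_step R \<eta> \<rho> g s grad x) {z. g z \<le> - \<rho>}
           \<le> sqrt (1 - \<sigma>\<^sup>2 / G\<^sup>2) * infdist x {z. g z \<le> - \<rho>} + \<eta> * Gf"
proof (rule infdist_polyak_step_le[OF cvx _ _ s grad \<open>0 \<le> \<eta>\<close> _ sharp(1)])
  obtain z where "g z \<le> - \<epsilon>" using level(1) by auto
  with level(3) have "g z \<le> - \<rho>" by linarith
  then show "{z. g z \<le> - \<rho>} \<noteq> {}" by blast
  show "{z. g z \<le> - \<rho>} \<subseteq> cball 0 R" using ball level(2) by force
  have "\<sigma> * infdist x {z. g z \<le> - \<rho>} \<le> max (g x - - \<rho>) 0"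
    by (rule infdist_sublevel_error_bound[OF cvx level(1)]) (use level sharp in auto)
  then show "\<sigma> * infdist x {z. g z \<le> - \<rho>} \<le> max (g x + \<rho>) 0" by simp
qed

lemma polyak_step_in_cball: "0 \<le> R \<Longrightarrow> polyak_step R \<eta> \<rho> g s grad x \<in> cball 0 R"
  unfolding polyak_step_eq_polyak_cut by (rule closest_point_in_set) auto

lemma affine_recurrence_le_geometric:
  fixes D :: "nat \<Rightarrow> real"
  assumes q: "0 \<le> q" "q < 1" and "0 \<le> c"
    and rec: "\<And>k. k < n \<Longrightarrow> D (Suc (m + k)) \<le> q * D (m + k) + c"
  shows "k \<le> n \<Longrightarrow> D (m + k) \<le> q ^ k * D m + c / (1 - q)"
proof (induction k)
  case 0
  then show ?case using q \<open>0 \<le> c\<close> by simp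
next
  case (Suc k)
  have "D (m + Suc k) \<le> q * D (m + k) + c" using rec Suc.prems by simp
  also have "\<dots> \<le> q * (q ^ k * D m + c / (1 - q)) + c"
    using Suc q by (simp add: mult_left_mono)
  also have "\<dots> = q ^ Suc k * D m + c / (1 - q)"
    using q by (simp add: field_simps)
  finally show ?case .
qed

lemma powr_half_eq_sqrt_power:
  fixes x :: real
  assumes "0 \<le> x" "0 < n"
  shows "x powr (real n / 2) = sqrt x ^ n"
  using assms by (simp add: powr_half_sqrt_powr powr_realpow' real_sqrt_power)

theorem mainTheorem10:
  fixes g :: "'a::euclidean_space \<Rightarrow> real"
    and f :: "nat \<Rightarrow> 'a \<Rightarrow> real"
    and f' :: "nat \<Rightarrow> 'a \<Rightarrow> 'a"
    and s :: "nat \<Rightarrow> 'a"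
    and x :: "nat \<Rightarrow> 'a"
    and T :: nat
    and R Gf Gg \<sigma> \<epsilon> \<eta> \<rho> :: real
  assumes T_pos: "T \<ge> 1"
    and g_convex: "convex_on UNIV g"
    and A1: "R > 0" "{z. g z \<le> 0} \<subseteq> cball 0 R"
    and A2_convex: "\<And>t. t \<in> {1..T} \<Longrightarrow> convex_on UNIV (f t)"
    and A2_grad: "\<And>t z. t \<in> {1..T} \<Longrightarrow> (f t has_derivative (\<lambda>h. inner (f' t z) h)) (at z)"
    and A2_bound: "Gf > 0" "\<And>t z. t \<in> {1..T} \<Longrightarrow> z \<in> cball 0 R \<Longrightarrow> norm (f' t z) \<le> Gf"
    and A3: "Gg > 0" "\<And>z v. z \<in> cball 0 R \<Longrightarrow> v \<in> subdiff g z \<Longrightarrow> norm v \<le> Gg"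
    and A4: "\<sigma> > 0" "\<epsilon> > 0" "{z. g z = - \<epsilon>} \<noteq> {}"
      "\<And>z v. g z = - \<epsilon> \<Longrightarrow> v \<in> subdiff g z \<Longrightarrow> norm v \<ge> \<sigma>"
    and x1: "x 1 \<in> cball 0 R"
    and eta: "\<eta> > 0"
    and rho: "0 \<le> \<rho>" "\<rho> \<le> \<epsilon>"
    and subgrad: "\<And>t. t \<in> {1..T} \<Longrightarrow> s t \<in> subdiff g (x t)"
    and step: "\<And>t. t \<in> {1..T} \<Longrightarrow> x (Suc t) = polyak_step R \<eta> \<rho> g (s t) (f' t (x t)) (x t)"
  shows "\<forall>t. 1 \<le> t \<and> t < T \<longrightarrow>
      infdist (x (Suc t)) {z. g z \<le> - \<rho>}
        \<le> sqrt (1 - \<sigma>\<^sup>2 / Gg\<^sup>2) * infdist (x t) {z. g z \<le> - \<rho>} + \<eta> * Gf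
    \<and> infdist (x (Suc t)) {z. g z \<le> - \<rho>}
        \<le> (1 - \<sigma>\<^sup>2 / Gg\<^sup>2) powr (real t / 2) * infdist (x 1) {z. g z \<le> - \<rho>}
          + \<eta> * Gf / (1 - sqrt (1 - \<sigma>\<^sup>2 / Gg\<^sup>2))"
proof -
  define \<gamma> where "\<gamma> = 1 - \<sigma>\<^sup>2 / Gg\<^sup>2"
  have level_ne: "{z. g z \<le> - \<epsilon>} \<noteq> {}" using A4(3) by (auto intro: eq_refl)
  have "\<sigma> \<le> Gg"
    using level_subgradient_norm_lower_le_upper[OF g_convex level_ne bounded_cball _ A3(2) A4(4)]
      A1(2) A4(2) by force
  then have \<gamma>: "0 \<le> \<gamma>" "sqrt \<gamma> < 1" using A4(1) A3(1) by (auto simp: \<gamma>_def field_simps power_mono)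
  have next_in_ball: "x (Suc t) \<in> cball 0 R" if "t \<in> {1..T}" for t
    using step[OF that] polyak_step_in_cball[OF less_imp_le[OF A1(1)]] by simp
  have in_ball: "x t \<in> cball 0 R" if "t \<in> {1..T}" for t
  proof (cases t)
    case (Suc k)
    with that x1 next_in_ball show ?thesis by (cases k) auto
  qed (use that in simp)
  let ?D = "\<lambda>t. infdist (x t) {z. g z \<le> - \<rho>}"
  have one_step: "?D (Suc t) \<le> sqrt \<gamma> * ?D t + \<eta> * Gf" if "1 \<le> t" "t < T" for t
  proof -
    have t: "t \<in> {1..T}" using that by simp
    show ?thesis
      unfolding step[OF t] \<gamma>_def
      by (rule infdist_polyak_step_le_sharp[OF g_convex A1(2) level_ne rho _ A4(4) subgrad[OF t]
            A3(2)[OF in_ball[OF t] subgrad[OF t]] A2_bound(2)[OF t in_ball[OF t]]])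
        (use A4(1) eta in auto)
  qed
  have "?D (1 + t) \<le> sqrt \<gamma> ^ t * ?D 1 + \<eta> * Gf / (1 - sqrt \<gamma>)" if "t < T" for t
    using that
    by (intro affine_recurrence_le_geometric[where D="?D" and n="T - 1"])
      (use \<gamma> one_step eta A2_bound(1) in auto)
  then show ?thesis
    using one_step \<gamma> powr_half_eq_sqrt_power[OF \<gamma>(1)] by (simp flip: \<gamma>_def)
qed

end
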